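(* Let $a<b$ be positive integers with $\gcd(a,b)=1$, let $\mathcal{E}$ be the equation $ax+by=z$, and let $n\ge R_2(\mathcal{E})$. Let $b^{-1}$ be any integer with $b^{-1}b\equiv 1\pmod a$ and $a^{-1}$ any integer with $a^{-1}a\equiv 1\pmod b$. Then $$M_{\mathcal{E}}(n)\le \sum_{z=a+b}^{\lfloor n/(a(a+b))\rfloor}\left(\frac{z}{ab}-\left\{\frac{b^{-1}z}{a}\right\}-\left\{\frac{a^{-1}z}{b}\right\}+1\right),$$ where $\{t\}=t-\lfloor t\rfloor$ denotes the fractional part.
   Context: For a positive integer $n$ write $[n]=\{1,\dots,n\}$. A $k$-coloring of $[n]$ is a map $\chi:[n]\to\{0,\dots,k-1\}$. A solution to a 3-variable equation $\mathcal{E}$ in $[n]$ is an ordered triple $(x,y,z)\in[n]^3$ satisfying $\mathcal{E}$; it is monochromatic under $\chi$ if $\chi(x)=\chi(y)=\chi(z)$. $\mu_\chi(\mathcal{E},n,k)$ is the number of monochromatic solutions under $\chi$, $M_{\mathcal{E}}(n,k)=\min_\chi \mu_\chi(\mathcal{E},n,k)$ over all $k$-colorings $\chi$ of $[n]$, and $M_{\mathcal{E}}(n)=M_{\mathcal{E}}(n,2)$. The 2-color Rado number $R_2(\mathcal{E})$ is the least integer $N$ such that every 2-coloring of $[N]$ has at least one monochromatic solution to $\mathcal{E}$. *)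

theory Defs
  imports Complex_Main
begin

definition lin_eq :: "nat \<Rightarrow> nat \<Rightarrow> nat \<times> nat \<times> nat \<Rightarrow> bool" where
  "lin_eq a b = (\<lambda>(x, y, z). a * x + b * y = z)"

definition is_coloring :: "nat \<Rightarrow> nat \<Rightarrow> (nat \<Rightarrow> nat) \<Rightarrow> bool" where
  "is_coloring n k \<chi> \<longleftrightarrow> (\<forall>x\<in>{1..n}. \<chi> x < k)"

definition mono_count :: "(nat \<times> nat \<times> nat \<Rightarrow> bool) \<Rightarrow> nat \<Rightarrow> (nat \<Rightarrow> nat) \<Rightarrow> nat" where
  "mono_count E n \<chi> = card {(x, y, z). x \<in> {1..n} \<and> y \<in> {1..n} \<and> z \<in> {1..n}
        \<and> E (x, y, z) \<and> \<chi> x = \<chi> y \<and> \<chi> y = \<chi> z}"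

definition M_k :: "(nat \<times> nat \<times> nat \<Rightarrow> bool) \<Rightarrow> nat \<Rightarrow> nat \<Rightarrow> nat" where
  "M_k E n k = Min {mono_count E n \<chi> | \<chi>. is_coloring n k \<chi>}"

definition M2 :: "(nat \<times> nat \<times> nat \<Rightarrow> bool) \<Rightarrow> nat \<Rightarrow> nat" where
  "M2 E n = M_k E n 2"

definition rado2 :: "(nat \<times> nat \<times> nat \<Rightarrow> bool) \<Rightarrow> nat" where
  "rado2 E = (LEAST N. \<forall>\<chi>. is_coloring N 2 \<chi> \<longrightarrow> mono_count E N \<chi> \<ge> 1)"

end

theory Submission
  imports Defs "HOL-Number_Theory.Cong"
begin

text \<open>Colour [n] with 1 exactly on the block m < x < (a + b)(m + 1), where
  m = n div (a (a + b)), and with 0 elsewhere.  A monochromatic solution of a x + b y = z then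
  has z \<le> m, so their number is at most the number of pairs (x, y) with a x + b y = z for
  a + b \<le> z \<le> m, and Popoviciu's formula bounds each of these counts by the summand.\<close>

lemma frac_of_int_div_of_nat:
  fixes k :: int and a :: nat
  assumes "0 < a"
  shows "frac (real_of_int k / real a) = real_of_int (k mod int a) / real a"
proof -
  have "real_of_int k = real a * real_of_int (k div int a) + real_of_int (k mod int a)"
    by (metis of_int_add of_int_mult of_int_of_nat_eq mult_div_mod_eq)
  moreover have "\<lfloor>real_of_int k / real a\<rfloor> = k div int a"
    using floor_divide_of_int_eq[of k "int a"] by simp
  ultimately show ?thesis
    using assms by (simp add: frac_def field_simps)
qed

lemma cong_mult_inverse_iff:
  fixes a b u y z :: int
  assumes "[u * b = 1] (mod a)"
  shows "[b * y = z] (mod a) \<longleftrightarrow> [y = u * z] (mod a)"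
proof
  assume "[b * y = z] (mod a)"
  then have "[u * (b * y) = u * z] (mod a)"
    by (rule cong_scalar_left)
  moreover have "[u * (b * y) = y] (mod a)"
    using cong_mult[OF assms cong_refl[of y]] by (simp add: ac_simps)
  ultimately show "[y = u * z] (mod a)"
    by (meson cong_sym cong_trans)
next
  assume "[y = u * z] (mod a)"
  then have "[b * y = (u * b) * z] (mod a)"
    using cong_scalar_left[of y "u * z" a b] by (simp add: ac_simps)
  also have "[(u * b) * z = z] (mod a)"
    using cong_mult[OF assms cong_refl[of z]] by simp
  finally show "[b * y = z] (mod a)" .
qed

lemma finite_lin_eq_solutions:
  fixes a b z :: nat
  assumes "0 < a" "0 < b"
  shows "finite {(x, y). a * x + b * y = z}"
proof -
  have "x \<le> z \<and> y \<le> z" if "a * x + b * y = z" for x y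
  proof -
    have "x \<le> a * x" "y \<le> b * y"
      using assms by simp_all
    with that show ?thesis
      by linarith
  qed
  then have "{(x, y). a * x + b * y = z} \<subseteq> {..z} \<times> {..z}"
    by auto
  then show ?thesis
    by (rule finite_subset) simp
qed

lemma lin_eq_solution_residues:
  fixes a b x y z :: nat and u v :: int
  assumes u: "[u * int b = 1] (mod int a)" and v: "[v * int a = 1] (mod int b)"
    and "a * x + b * y = z"
  shows "int x mod int b = (v * int z) mod int b" "int y mod int a = (u * int z) mod int a"
proof -
  have "int z = int b * int y + int a * int x"
    using assms(3) by (simp flip: of_nat_mult of_nat_add)
  then have "[int b * int y = int z] (mod int a)" "[int a * int x = int z] (mod int b)"
    by (simp_all add: cong_def)
  then show "int x mod int b = (v * int z) mod int b" "int y mod int a = (u * int z) mod int a"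
    using cong_mult_inverse_iff[OF u] cong_mult_inverse_iff[OF v] by (simp_all add: cong_def)
qed

lemma lin_eq_solution_quotients:
  fixes a b x y :: int
  shows "(a * x + b * y) - a * (x mod b) - b * (y mod a) = a * b * (x div b + y div a)"
proof -
  have "(a * x + b * y) - a * (x mod b) - b * (y mod a) = a * (x - x mod b) + b * (y - y mod a)"
    by (simp add: algebra_simps)
  also have "\<dots> = a * (b * (x div b)) + b * (a * (y div a))"
    by (simp add: minus_mod_eq_mult_div)
  finally show ?thesis
    by (simp add: algebra_simps)
qed

text \<open>The residues (v z) mod b and (u z) mod a are those of every solution (x, y); the defect is a
  multiple of a b, and since the residues are below b and a the multiple is at least -1.\<close>
lemma lin_eq_residue_defect:
  fixes a b z :: nat and u v :: int
  assumes a: "0 < a" and b: "0 < b" and "coprime a b"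
    and u: "[u * int b = 1] (mod int a)" and v: "[v * int a = 1] (mod int b)"
  obtains q where "int z - int a * ((v * int z) mod int b) - int b * ((u * int z) mod int a)
      = int a * int b * q" and "-1 \<le> q"
proof -
  define x0 where "x0 = (v * int z) mod int b"
  define y0 where "y0 = (u * int z) mod int a"
  have "[int b * y0 = int z] (mod int a)" "[int a * x0 = int z] (mod int b)"
    using cong_mult_inverse_iff[OF u] cong_mult_inverse_iff[OF v]
    by (simp_all add: cong_def x0_def y0_def)
  then have "int a dvd int z - int b * y0 - int a * x0" "int b dvd int z - int a * x0 - int b * y0"
    by (meson cong_iff_dvd_diff cong_sym dvd_diff dvd_triv_left)+
  then have "int a dvd int z - int a * x0 - int b * y0" "int b dvd int z - int a * x0 - int b * y0"
    by (simp_all add: algebra_simps)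
  then obtain q where q: "int z - int a * x0 - int b * y0 = int a * int b * q"
    using \<open>coprime a b\<close> divides_mult by (metis coprime_int_iff dvdE)
  have "int a * x0 < int a * int b" "int b * y0 < int b * int a"
    using a b by (simp_all add: x0_def y0_def)
  then have "int a * int b * (-2) < int a * int b * q"
    using q by (simp add: algebra_simps)
  then have "-2 < q"
    using a b mult_less_cancel_left_pos[of "int a * int b" "-2" q] by simp
  then have "-1 \<le> q"
    by simp
  with q show thesis
    unfolding x0_def y0_def by (rule that)
qed

text \<open>Popoviciu's argument: by the residues lemma a solution is determined by x div b, which
  ranges over {0..q}.  (In fact every value is attained, so equality holds.)\<close>
lemma card_lin_eq_solutions_le:
  fixes a b z :: nat and u v :: int
  assumes a: "0 < a" and b: "0 < b" and "coprime a b"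
    and u: "[u * int b = 1] (mod int a)" and v: "[v * int a = 1] (mod int b)"
  shows "real (card {(x, y). a * x + b * y = z}) \<le>
    real z / real (a * b) - frac (real_of_int (u * int z) / real a)
      - frac (real_of_int (v * int z) / real b) + 1"
proof -
  define S where "S = {(x, y). a * x + b * y = z}"
  define x0 where "x0 = (v * int z) mod int b"
  define y0 where "y0 = (u * int z) mod int a"
  obtain q where q: "int z - int a * x0 - int b * y0 = int a * int b * q" and "-1 \<le> q"
    using lin_eq_residue_defect[OF assms] unfolding x0_def y0_def .
  have residues: "int x mod int b = x0" "int y mod int a = y0" if "(x, y) \<in> S" for x y
  proof -
    from that have "a * x + b * y = z"
      by (simp add: S_def)
    from lin_eq_solution_residues[OF u v this]
    show "int x mod int b = x0" "int y mod int a = y0"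
      unfolding x0_def y0_def .
  qed
  have "int x div int b \<in> {0..q}" if "(x, y) \<in> S" for x y
  proof -
    have "int z = int a * int x + int b * int y"
      using that by (simp add: S_def flip: of_nat_mult of_nat_add)
    then have "int a * int b * (int x div int b + int y div int a) = int a * int b * q"
      using lin_eq_solution_quotients[of "int a" "int x" "int b" "int y"] residues[OF that] q
      by simp
    then have "int x div int b + int y div int a = q"
      using a b by simp
    moreover have "0 \<le> int x div int b" "0 \<le> int y div int a"
      by (simp_all add: pos_imp_zdiv_nonneg_iff a b)
    ultimately show ?thesis
      by simp
  qed
  then have "(\<lambda>(x, y). int x div int b) ` S \<subseteq> {0..q}"
    by auto
  moreover have "inj_on (\<lambda>(x, y). int x div int b) S"
  proof (rule inj_onI, clarify)
    fix x y x' y'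
    assume s: "(x, y) \<in> S" "(x', y') \<in> S" and "int x div int b = int x' div int b"
    then have "x = x'"
      using residues[OF s(1)] residues[OF s(2)] by (metis mult_div_mod_eq of_nat_eq_iff)
    moreover have "a * x + b * y = z" "a * x' + b * y' = z"
      using s by (simp_all add: S_def)
    ultimately have "b * y = b * y'"
      by (metis add_left_cancel)
    with b \<open>x = x'\<close> show "x = x' \<and> y = y'"
      by simp
  qed
  ultimately have "card S \<le> card {0..q}"
    by (intro card_inj_on_le) auto
  then have "real (card S) \<le> real_of_int (q + 1)"
    using \<open>-1 \<le> q\<close> by simp
  also have "\<dots> = real z / real (a * b) - real_of_int y0 / real a - real_of_int x0 / real b + 1"
    using arg_cong[OF q, of real_of_int] a b by (simp add: field_simps)
  finally show ?thesis
    unfolding S_def x0_def y0_def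
    using frac_of_int_div_of_nat[OF a, of "u * int z"] frac_of_int_div_of_nat[OF b, of "v * int z"]
    by simp
qed

lemma M_k_le_mono_count:
  assumes "is_coloring n k \<chi>"
  shows "M_k E n k \<le> mono_count E n \<chi>"
proof -
  have "mono_count E n \<chi>' \<le> card ({1..n} \<times> {1..n} \<times> {1..n})" for \<chi>'
    unfolding mono_count_def by (rule card_mono) auto
  then have "{mono_count E n \<chi>' | \<chi>'. is_coloring n k \<chi>'} \<subseteq> {..card ({1..n} \<times> {1..n} \<times> {1..n})}"
    by auto
  then have "finite {mono_count E n \<chi>' | \<chi>'. is_coloring n k \<chi>'}"
    by (rule finite_subset) simp
  with assms show ?thesis
    unfolding M_k_def by (intro Min_le) auto
qed

lemma mono_count_lin_eq_le_sum:
  fixes a b n m :: nat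
  assumes "0 < a" "0 < b"
    and small: "\<And>x y z. x \<in> {1..n} \<Longrightarrow> y \<in> {1..n} \<Longrightarrow> z \<in> {1..n} \<Longrightarrow> a * x + b * y = z
      \<Longrightarrow> \<chi> x = \<chi> y \<Longrightarrow> \<chi> y = \<chi> z \<Longrightarrow> z \<le> m"
  shows "mono_count (lin_eq a b) n \<chi> \<le> (\<Sum>z = a + b..m. card {(x, y). a * x + b * y = z})"
proof -
  define F where "F z = {(x, y). a * x + b * y = z}" for z
  have fin: "finite (F z)" for z
    using finite_lin_eq_solutions[OF assms(1,2)] by (simp add: F_def)
  have sub: "{(x, y, z). x \<in> {1..n} \<and> y \<in> {1..n} \<and> z \<in> {1..n} \<and> lin_eq a b (x, y, z)
          \<and> \<chi> x = \<chi> y \<and> \<chi> y = \<chi> z}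
        \<subseteq> (\<lambda>(z, x, y). (x, y, z)) ` (SIGMA z:{a + b..m}. F z)"
  proof clarify
    fix x y z
    assume xyz: "x \<in> {1..n}" "y \<in> {1..n}" "z \<in> {1..n}" "lin_eq a b (x, y, z)"
      "\<chi> x = \<chi> y" "\<chi> y = \<chi> z"
    then have eq: "a * x + b * y = z"
      by (simp add: lin_eq_def)
    moreover have "a * 1 + b * 1 \<le> a * x + b * y"
      using xyz(1,2) by (intro add_mono mult_le_mono2) auto
    ultimately have "(z, x, y) \<in> (SIGMA z:{a + b..m}. F z)"
      using small[OF xyz(1-3) eq xyz(5,6)] by (simp add: F_def)
    then show "(x, y, z) \<in> (\<lambda>(z, x, y). (x, y, z)) ` (SIGMA z:{a + b..m}. F z)"
      by (rule rev_image_eqI) simp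
  qed
  have "mono_count (lin_eq a b) n \<chi> \<le> card ((\<lambda>(z, x, y). (x, y, z)) ` (SIGMA z:{a + b..m}. F z))"
    unfolding mono_count_def by (rule card_mono[OF _ sub]) (simp add: fin)
  also have "\<dots> \<le> card (SIGMA z:{a + b..m}. F z)"
    by (rule card_image_le) (simp add: fin)
  also have "\<dots> = (\<Sum>z = a + b..m. card (F z))"
    using fin by (simp add: card_SigmaI)
  finally show ?thesis
    by (simp add: F_def)
qed

definition interval_coloring :: "nat \<Rightarrow> nat \<Rightarrow> nat \<Rightarrow> nat" where
  "interval_coloring m K x = of_bool (m < x \<and> x < K)"

text \<open>A monochromatic solution cannot have both x, y in the middle block (then z \<ge> K), and
  cannot have x or y \<ge> K (then z > n); so x, y, z \<le> m.\<close>
lemma interval_coloring_mono_solution_le: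
  fixes a b n m K x y z :: nat
  assumes "a \<le> b" and "(a + b) * m < K" "K \<le> (a + b) * (m + 1)" "n < a * K"
    and eq: "a * x + b * y = z" and "z \<le> n"
    and mono: "interval_coloring m K x = interval_coloring m K y"
      "interval_coloring m K y = interval_coloring m K z"
  shows "z \<le> m"
proof -
  have in_block: "m < x \<and> x < K \<longleftrightarrow> m < y \<and> y < K" "m < y \<and> y < K \<longleftrightarrow> m < z \<and> z < K"
    using mono by (simp_all add: interval_coloring_def of_bool_eq_iff)
  show ?thesis
  proof (cases "m < z \<and> z < K")
    case True
    then have "m + 1 \<le> x" "m + 1 \<le> y" "z < K"
      using in_block by simp_all
    then have "(a + b) * (m + 1) \<le> z"
      using eq add_mono[OF mult_le_mono2[of "m + 1" x a] mult_le_mono2[of "m + 1" y b]]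
      by (simp add: algebra_simps)
    with \<open>z < K\<close> \<open>K \<le> (a + b) * (m + 1)\<close> show ?thesis
      by linarith
  next
    case False
    have "x < K"
    proof (rule ccontr)
      assume "\<not> x < K"
      then have "a * K \<le> a * x"
        by simp
      with eq \<open>z \<le> n\<close> \<open>n < a * K\<close> show False
        by linarith
    qed
    moreover have "y < K"
    proof (rule ccontr)
      assume "\<not> y < K"
      have "a * K \<le> b * K"
        using \<open>a \<le> b\<close> by simp
      also have "\<dots> \<le> b * y"
        using \<open>\<not> y < K\<close> by simp
      finally show False
        using eq \<open>z \<le> n\<close> \<open>n < a * K\<close> by linarith
    qed
    ultimately have "x \<le> m" "y \<le> m"
      using False in_block by auto
    then have "z \<le> (a + b) * m"
      using eq add_mono[OF mult_le_mono2[of x m a] mult_le_mono2[of y m b]]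
      by (simp add: algebra_simps)
    with \<open>(a + b) * m < K\<close> False show ?thesis
      by linarith
  qed
qed

theorem theorem4:
  fixes a b n :: nat and binv ainv :: int
  assumes "0 < a" "a < b" "coprime a b"
    and "n \<ge> rado2 (lin_eq a b)"
    and "(binv * int b) mod int a = 1 mod int a"
    and "(ainv * int a) mod int b = 1 mod int b"
  shows "real (M2 (lin_eq a b) n) \<le>
    (\<Sum>z = a + b .. n div (a * (a + b)).
       real z / real (a * b) - frac (real_of_int (binv * int z) / real a)
         - frac (real_of_int (ainv * int z) / real b) + 1)"
proof -
  \<comment> \<open>The bound holds for every n.\<close>
  define m where "m = n div (a * (a + b))"
  define K where "K = (a + b) * (m + 1)"
  define \<chi> where "\<chi> = interval_coloring m K"
  have "n < a * K"
    using assms(1) div_less_iff_less_mult[of "a * (a + b)" n "m + 1"]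
    by (simp add: m_def K_def algebra_simps)
  then have mono_small: "z \<le> m"
    if "z \<in> {1..n}" "a * x + b * y = z" "\<chi> x = \<chi> y" "\<chi> y = \<chi> z" for x y z
    using that assms(2) unfolding \<chi>_def
    by (intro interval_coloring_mono_solution_le[of a b m K n x y z]) (auto simp: K_def)
  have "is_coloring n 2 \<chi>"
    by (simp add: is_coloring_def \<chi>_def interval_coloring_def)
  then have "M2 (lin_eq a b) n \<le> mono_count (lin_eq a b) n \<chi>"
    unfolding M2_def by (rule M_k_le_mono_count)
  also have "\<dots> \<le> (\<Sum>z = a + b..m. card {(x, y). a * x + b * y = z})"
    using assms(1,2) mono_small by (intro mono_count_lin_eq_le_sum) auto
  finally have "real (M2 (lin_eq a b) n) \<le> (\<Sum>z = a + b..m. real (card {(x, y). a * x + b * y = z}))"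
    by (simp flip: of_nat_sum)
  also have "\<dots> \<le> (\<Sum>z = a + b..m. real z / real (a * b) - frac (real_of_int (binv * int z) / real a)
         - frac (real_of_int (ainv * int z) / real b) + 1)"
    using assms(1-3,5,6) by (intro sum_mono card_lin_eq_solutions_le) (auto simp: cong_def)
  finally show ?thesis
    by (simp add: m_def)
qed

end
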